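(* Let $\mathcal{O}$ be a nonempty set of quantum channels on $n$ qubits closed under composition, $\Psi$ a channel on $n$ qubits with $\gamma(\Psi)<\infty$, and $k\ge0$ an integer. Then for every sample $S=(z_1,\ldots,z_m)$, \[ \hat{G}_S(\mathcal{F}(\mathcal{O}^{(k)}_\Psi))\le\gamma^*\,\hat{G}_S(\mathcal{F}(\mathcal{O})),\qquad\gamma^*=\min\{1+2\gamma_{\max,n},(1+2\gamma(\Psi))^k\}, \] and for every distribution $D$, $G_D(\mathcal{F}(\mathcal{O}^{(k)}_\Psi))\le\gamma^*G_D(\mathcal{F}(\mathcal{O}))$.
   Context: A quantum channel on $n$ qubits is a completely positive trace-preserving linear map on $2^n\times2^n$ complex matrices. For a channel $\Phi$, $f_\Phi(x,y)=\mathrm{Tr}[\Phi(|x\rangle\langle x|)\,|y\rangle\langle y|]$; $\mathcal{F}(\Omega)=\{f_\Phi:\Phi\in\Omega\}$. Empirical Gaussian complexity: $\hat{G}_S(\mathcal{G})=\mathbb{E}_{g}[\sup_{h\in\mathcal{G}}\frac1m\sum_i g_i h(z_i)]$ with $g_i$ i.i.d. $\mathcal{N}(0,1)$; $G_D(\mathcal{G})=\mathbb{E}_{S\sim D^m}\hat{G}_S(\mathcal{G})$. Free robustness w.r.t. $\mathcal{O}$: $\gamma(\Phi)=\inf\{\lambda\ge0:\exists\,\Phi'\in\mathrm{Conv}(\mathcal{O}),\ (\Phi+\lambda\Phi')/(1+\lambda)\in\mathrm{Conv}(\mathcal{O})\}$; $\gamma_{\max,n}=\sup$ of $\gamma(\Phi)$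 over all channels on $n$ qubits (if infinite, $\gamma^*=(1+2\gamma(\Psi))^k$). $\mathcal{O}^{(k)}_\Psi$ is the set of all finite compositions of elements of $\mathcal{O}\cup\{\Psi\}$ in which $\Psi$ appears at most $k$ times. *)

theory Defs
  imports "HOL-Probability.Probability" "Jordan_Normal_Form.Matrix"
begin

definition mtrace :: "complex mat \<Rightarrow> complex" where
  "mtrace A = (\<Sum>i<dim_row A. A $$ (i,i))"

definition psd :: "nat \<Rightarrow> complex mat \<Rightarrow> bool" where
  "psd d A \<longleftrightarrow> A \<in> carrier_mat d d \<and>
     (\<forall>v :: nat \<Rightarrow> complex.
        let q = (\<Sum>i<d. \<Sum>j<d. cnj (v i) * A $$ (i,j) * v j) in Im q = 0 \<and> Re q \<ge> 0)"

text \<open>Block (i,j) (of size N x N) of a kN x kN matrix viewed as element of M_k tensor M_N.\<close>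
definition blk :: "nat \<Rightarrow> complex mat \<Rightarrow> nat \<Rightarrow> nat \<Rightarrow> complex mat" where
  "blk N X i j = mat N N (\<lambda>(a,b). X $$ (i*N + a, j*N + b))"

text \<open>Ampliation (id_k tensor Phi) applied to a kN x kN matrix.\<close>
definition ampl :: "nat \<Rightarrow> nat \<Rightarrow> (complex mat \<Rightarrow> complex mat) \<Rightarrow> complex mat \<Rightarrow> complex mat" where
  "ampl N k \<Phi> X = mat (k*N) (k*N) (\<lambda>(p,q). \<Phi> (blk N X (p div N) (q div N)) $$ (p mod N, q mod N))"

text \<open>A channel on N x N matrices, represented as a function on complex matrices which is
  the zero matrix outside the carrier (extensional normalisation).\<close>
definition is_channel :: "nat \<Rightarrow> (complex mat \<Rightarrow> complex mat) \<Rightarrow> bool" where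
  "is_channel N \<Phi> \<longleftrightarrow>
     (\<forall>A. A \<notin> carrier_mat N N \<longrightarrow> \<Phi> A = 0\<^sub>m N N) \<and>
     (\<forall>A \<in> carrier_mat N N. \<Phi> A \<in> carrier_mat N N) \<and>
     (\<forall>A \<in> carrier_mat N N. \<forall>B \<in> carrier_mat N N. \<Phi> (A + B) = \<Phi> A + \<Phi> B) \<and>
     (\<forall>A \<in> carrier_mat N N. \<forall>c. \<Phi> (c \<cdot>\<^sub>m A) = c \<cdot>\<^sub>m \<Phi> A) \<and>
     (\<forall>k X. psd (k*N) X \<longrightarrow> psd (k*N) (ampl N k \<Phi> X)) \<and>
     (\<forall>A \<in> carrier_mat N N. mtrace (\<Phi> A) = mtrace A)"

definition qchannel :: "nat \<Rightarrow> (complex mat \<Rightarrow> complex mat) \<Rightarrow> bool" where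
  "qchannel n \<Phi> \<longleftrightarrow> is_channel (2^n) \<Phi>"

definition conv_ch :: "nat \<Rightarrow> (complex mat \<Rightarrow> complex mat) set \<Rightarrow> (complex mat \<Rightarrow> complex mat) set" where
  "conv_ch N \<O> = {\<Phi>. \<exists>(r::nat) (c::nat \<Rightarrow> real) Ps.
      (\<forall>i<r. c i \<ge> 0 \<and> Ps i \<in> \<O>) \<and> (\<Sum>i<r. c i) = 1 \<and>
      \<Phi> = (\<lambda>A. mat N N (\<lambda>ab. \<Sum>i<r. complex_of_real (c i) * (Ps i A) $$ ab))}"

definition mix_ch :: "nat \<Rightarrow> real \<Rightarrow> (complex mat \<Rightarrow> complex mat) \<Rightarrow> (complex mat \<Rightarrow> complex mat)
    \<Rightarrow> (complex mat \<Rightarrow> complex mat)" where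
  "mix_ch N l \<Phi> \<Phi>' = (\<lambda>A. mat N N (\<lambda>ab. (\<Phi> A $$ ab + complex_of_real l * \<Phi>' A $$ ab) / complex_of_real (1 + l)))"

text \<open>Free robustness (infinite if no admissible lambda exists).\<close>
definition robustness :: "nat \<Rightarrow> (complex mat \<Rightarrow> complex mat) set \<Rightarrow> (complex mat \<Rightarrow> complex mat) \<Rightarrow> ereal" where
  "robustness n \<O> \<Phi> = Inf {ereal l | l. l \<ge> 0 \<and>
      (\<exists>\<Phi>' \<in> conv_ch (2^n) \<O>. mix_ch (2^n) l \<Phi> \<Phi>' \<in> conv_ch (2^n) \<O>)}"

definition gamma_max :: "nat \<Rightarrow> (complex mat \<Rightarrow> complex mat) set \<Rightarrow> ereal" where
  "gamma_max n \<O> = (SUP \<Phi> \<in> {\<Phi>. qchannel n \<Phi>}. robustness n \<O> \<Phi>)"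

text \<open>O^(k)_Psi: nonempty finite compositions of elements of O and Psi, where each slot is
  either an element of O (Some) or Psi (None), with at most k slots equal to Psi.\<close>
definition comp_slots :: "(complex mat \<Rightarrow> complex mat) \<Rightarrow> (complex mat \<Rightarrow> complex mat) option list
    \<Rightarrow> (complex mat \<Rightarrow> complex mat)" where
  "comp_slots \<Psi> L = foldr (\<lambda>s acc. (case s of None \<Rightarrow> \<Psi> | Some \<Phi> \<Rightarrow> \<Phi>) \<circ> acc) L id"

definition O_k :: "(complex mat \<Rightarrow> complex mat) set \<Rightarrow> (complex mat \<Rightarrow> complex mat) \<Rightarrow> nat
    \<Rightarrow> (complex mat \<Rightarrow> complex mat) set" where
  "O_k \<O> \<Psi> k = {comp_slots \<Psi> L | L. L \<noteq> [] \<and> (\<forall>s \<in> set L. s = None \<or> the s \<in> \<O>)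
      \<and> length (filter (\<lambda>s. s = None) L) \<le> k}"

definition ketbra :: "nat \<Rightarrow> nat \<Rightarrow> complex mat" where
  "ketbra N x = mat N N (\<lambda>(i,j). if i = x \<and> j = x then 1 else 0)"

text \<open>f_Phi(x,y) = Tr[Phi(|x><x|) |y><y|] (a real number for a channel).\<close>
definition f_ch :: "nat \<Rightarrow> (complex mat \<Rightarrow> complex mat) \<Rightarrow> nat \<times> nat \<Rightarrow> real" where
  "f_ch n \<Phi> z = Re (mtrace (\<Phi> (ketbra (2^n) (fst z)) * ketbra (2^n) (snd z)))"

definition F_cls :: "nat \<Rightarrow> (complex mat \<Rightarrow> complex mat) set \<Rightarrow> (nat \<times> nat \<Rightarrow> real) set" where
  "F_cls n \<Omega> = f_ch n ` \<Omega>"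

text \<open>Domain {0,1}^n x {0,1}^n, basis states encoded as numbers < 2^n.\<close>
definition dom_n :: "nat \<Rightarrow> (nat \<times> nat) set" where
  "dom_n n = {..<2^n} \<times> {..<2^n}"

definition gauss_m :: "nat \<Rightarrow> (nat \<Rightarrow> real) measure" where
  "gauss_m m = PiM {..<m} (\<lambda>_. density lborel std_normal_density)"

definition emp_gauss :: "nat \<Rightarrow> (nat \<Rightarrow> 'z) \<Rightarrow> ('z \<Rightarrow> real) set \<Rightarrow> real" where
  "emp_gauss m S H = (\<integral>g. (SUP h \<in> H. (1 / real m) * (\<Sum>i<m. g i * h (S i))) \<partial>gauss_m m)"

definition gauss_cx :: "nat \<Rightarrow> 'z pmf \<Rightarrow> 'z \<Rightarrow> ('z \<Rightarrow> real) set \<Rightarrow> real" where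
  "gauss_cx m D dflt H = measure_pmf.expectation (Pi_pmf {..<m} dflt (\<lambda>_. D)) (\<lambda>S. emp_gauss m S H)"

end

theory Submission
  imports Defs
begin

text \<open>The robustness \<gamma> of \<Psi> lets one write \<Psi> = (1 + \<gamma>) P - \<gamma> P' with P, P' convex combinations
  of free channels, i.e. as an affine combination of elements of O of l1-weight 1 + 2 \<gamma>. Since O
  is closed under composition and channels are linear, a composition using \<Psi> at most k times is
  an affine combination of elements of O of weight at most (1 + 2 \<gamma>)^k; applying the same
  argument to the composite channel itself gives the weight 1 + 2 \<gamma>_max. The map \<Phi> \<mapsto> f_\<Phi> is
  linear, so F(O^(k)) consists of such affine combinations of F(O). For an affine combination
  \<Sum> c_j h_j with \<Sum> c_j = 1 and \<Sum> |c_j| \<le> W, the Gaussian correlation is at most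
  X(g) + (W - 1)/2 (X(g) + X(-g)), where X(g) is the supremum of the correlations over F(O), and
  the symmetry of the Gaussian distribution turns this into the factor W.\<close>

section \<open>Standard Gaussian vectors\<close>

abbreviation std_normal :: "real measure" where
  "std_normal \<equiv> density lborel std_normal_density"

lemma prob_space_std_normal: "prob_space std_normal"
  by (rule prob_space_normal_density) simp

lemma measurable_gauss_m_component: "i < m \<Longrightarrow> (\<lambda>g. g i) \<in> gauss_m m \<rightarrow>\<^sub>M std_normal"
  unfolding gauss_m_def by (intro measurable_component_singleton) auto

lemma borel_measurable_gauss_m_component: "i < m \<Longrightarrow> (\<lambda>g. g i) \<in> borel_measurable (gauss_m m)"
  using measurable_gauss_m_component measurable_cong_sets[of _ _ std_normal borel] by simp

lemma integrable_gauss_m_abs_component: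
  assumes "i < m"
  shows "integrable (gauss_m m) (\<lambda>g. \<bar>g i\<bar>)"
proof -
  have "integrable std_normal (\<lambda>x. \<bar>x\<bar>)"
    using integrable_std_normal_moment_abs[of 1] by (subst integrable_density) auto
  moreover have "distr (gauss_m m) std_normal (\<lambda>g. g i) = std_normal"
    unfolding gauss_m_def using assms by (intro distr_PiM_component prob_space_std_normal) auto
  ultimately show ?thesis
    using integrable_distr_eq[OF measurable_gauss_m_component[OF assms], of "\<lambda>x. \<bar>x\<bar>"] by simp
qed

lemma distr_std_normal_uminus: "distr std_normal std_normal uminus = std_normal"
proof -
  have lborel: "distr lborel lborel uminus = (lborel :: real measure)"
    using lborel_distr_uminus by (metis distr_cong sets_lborel)
  have "distr (density (distr lborel lborel uminus) (\<lambda>x. ennreal (std_normal_density x))) lborel uminus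
      = density lborel ((\<lambda>x. ennreal (std_normal_density x)) \<circ> uminus)"
    by (rule distr_density_distr) auto
  also have "(\<lambda>x. ennreal (std_normal_density x)) \<circ> uminus = (\<lambda>x. ennreal (std_normal_density x))"
    by (auto simp: o_def normal_density_def)
  finally have "distr std_normal lborel uminus = std_normal" unfolding lborel .
  moreover have "distr std_normal std_normal uminus = distr std_normal lborel uminus"
    by (rule distr_cong) auto
  ultimately show ?thesis by simp
qed

text \<open>Only the coordinates below m are negated, so that neg_on m maps the extensional
  product space gauss_m m to itself.\<close>
definition neg_on :: "nat \<Rightarrow> (nat \<Rightarrow> real) \<Rightarrow> nat \<Rightarrow> real" where
  "neg_on m = compose {..<m} uminus"

lemma neg_on_apply: "i < m \<Longrightarrow> neg_on m g i = - g i"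
  by (simp add: neg_on_def compose_def)

lemma measurable_neg_on: "neg_on m \<in> gauss_m m \<rightarrow>\<^sub>M gauss_m m"
  unfolding neg_on_def gauss_m_def compose_def
  by (rule measurable_restrict) simp

lemma distr_gauss_m_neg_on: "distr (gauss_m m) (gauss_m m) (neg_on m) = gauss_m m"
proof -
  have "distr (gauss_m m) (gauss_m m) (neg_on m) = PiM {..<m} (\<lambda>i. distr std_normal std_normal uminus)"
    unfolding neg_on_def gauss_m_def
    by (rule distr_PiM_finite_prob_space') (auto intro: prob_space_std_normal)
  then show ?thesis using distr_std_normal_uminus by (simp add: gauss_m_def)
qed

section \<open>Gaussian correlations of a bounded function class\<close>

definition corr :: "nat \<Rightarrow> (nat \<Rightarrow> 'z) \<Rightarrow> ('z \<Rightarrow> real) \<Rightarrow> (nat \<Rightarrow> real) \<Rightarrow> real" where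
  "corr m S h g = (1 / real m) * (\<Sum>i<m. g i * h (S i))"

definition mean_abs :: "nat \<Rightarrow> (nat \<Rightarrow> real) \<Rightarrow> real" where
  "mean_abs m g = (1 / real m) * (\<Sum>i<m. \<bar>g i\<bar>)"

lemma emp_gauss_eq_integral_corr: "emp_gauss m S H = (\<integral>g. (SUP h\<in>H. corr m S h g) \<partial>gauss_m m)"
  by (simp add: emp_gauss_def corr_def)

lemma corr_neg_on: "corr m S h (neg_on m g) = - corr m S h g"
  by (simp add: corr_def neg_on_apply sum_negf)

lemma borel_measurable_mean_abs_diff: "(\<lambda>g. mean_abs m (\<lambda>i. g i - c i)) \<in> borel_measurable (gauss_m m)"
  unfolding mean_abs_def
  by (intro borel_measurable_times borel_measurable_sum borel_measurable_const borel_measurable_abs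
      borel_measurable_diff borel_measurable_gauss_m_component) auto

lemma mean_abs_nonneg: "0 \<le> mean_abs m g"
  unfolding mean_abs_def by (simp add: sum_nonneg)

lemma integrable_mean_abs: "integrable (gauss_m m) (mean_abs m)"
  unfolding mean_abs_def[abs_def]
  by (intro integrable_mult_right Bochner_Integration.integrable_sum integrable_gauss_m_abs_component) auto

lemma abs_corr_diff_le:
  assumes "\<forall>i<m. \<bar>h (S i)\<bar> \<le> 1"
  shows "\<bar>corr m S h g - corr m S h g'\<bar> \<le> mean_abs m (\<lambda>i. g i - g' i)"
proof -
  have "\<bar>(\<Sum>i<m. g i * h (S i)) - (\<Sum>i<m. g' i * h (S i))\<bar> = \<bar>\<Sum>i<m. (g i - g' i) * h (S i)\<bar>"
    by (simp add: sum_subtractf left_diff_distrib)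
  also have "\<dots> \<le> (\<Sum>i<m. \<bar>(g i - g' i) * h (S i)\<bar>)" by (rule sum_abs)
  also have "\<dots> \<le> (\<Sum>i<m. \<bar>g i - g' i\<bar>)"
    using assms by (intro sum_mono) (auto simp: abs_mult mult_left_le)
  finally show ?thesis
    unfolding corr_def mean_abs_def right_diff_distrib[symmetric]
    by (simp add: abs_mult divide_right_mono)
qed

lemma mean_abs_rat_approx:
  assumes "d > 0"
  shows "\<exists>qs :: rat list. mean_abs m (\<lambda>i. g i - of_rat (qs ! i)) \<le> d"
proof -
  have "\<exists>q :: rat. \<bar>g i - of_rat q\<bar> \<le> d" for i
  proof -
    obtain r where r: "r \<in> \<rat>" "g i - d < r" "r < g i + d"
      using Rats_dense_in_real[of "g i - d" "g i + d"] assms by auto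
    then obtain q where "r = of_rat q" by (auto elim: Rats_cases)
    then show ?thesis using r by (intro exI[of _ q]) auto
  qed
  then obtain q :: "nat \<Rightarrow> rat" where q: "\<And>i. \<bar>g i - of_rat (q i)\<bar> \<le> d" by metis
  define qs where "qs = map q [0..<m]"
  have "(\<Sum>i<m. \<bar>g i - of_rat (qs ! i)\<bar>) \<le> (\<Sum>i<m. d)"
    using q by (intro sum_mono) (simp add: qs_def)
  then have "mean_abs m (\<lambda>i. g i - of_rat (qs ! i)) \<le> (1 / real m) * (real m * d)"
    unfolding mean_abs_def by (intro mult_left_mono) auto
  also have "\<dots> \<le> d" using assms by (cases "m = 0") auto
  finally show ?thesis by blast
qed

lemma affine_combination_le:
  fixes c x :: "nat \<Rightarrow> real"
  assumes c: "(\<Sum>j<r. c j) = 1" "(\<Sum>j<r. \<bar>c j\<bar>) \<le> W"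
    and x: "\<And>j. j < r \<Longrightarrow> x j \<le> X" "\<And>j. j < r \<Longrightarrow> - x j \<le> Y" and XY: "0 \<le> X + Y"
  shows "(\<Sum>j<r. c j * x j) \<le> X + (W - 1) / 2 * (X + Y)"
proof -
  define P where "P = (\<Sum>j<r. max (c j) 0)"
  define Q where "Q = (\<Sum>j<r. max (- c j) 0)"
  have "P - Q = (\<Sum>j<r. c j)"
    unfolding P_def Q_def sum_subtractf[symmetric] by (intro sum.cong) auto
  moreover have "P + Q = (\<Sum>j<r. \<bar>c j\<bar>)"
    unfolding P_def Q_def sum.distrib[symmetric] by (intro sum.cong) auto
  ultimately have P: "P = 1 + Q" and Q: "1 + 2 * Q \<le> W" using c by linarith+
  have "(\<Sum>j<r. c j * x j) \<le> (\<Sum>j<r. max (c j) 0 * X + max (- c j) 0 * Y)"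
  proof (rule sum_mono)
    fix j assume "j \<in> {..<r}"
    then have "x j \<le> X" "- x j \<le> Y" using x by auto
    then show "c j * x j \<le> max (c j) 0 * X + max (- c j) 0 * Y"
      using mult_left_mono[of "x j" X "c j"] mult_left_mono[of "- x j" Y "- c j"]
      by (cases "0 \<le> c j") auto
  qed
  also have "\<dots> = P * X + Q * Y"
    by (simp add: P_def Q_def sum.distrib sum_distrib_right)
  also have "\<dots> = X + Q * (X + Y)"
    using P by (simp add: algebra_simps)
  also have "\<dots> \<le> X + (W - 1) / 2 * (X + Y)"
    using mult_right_mono[of Q "(W - 1) / 2" "X + Y"] Q XY by simp
  finally show ?thesis .
qed

locale bounded_sample =
  fixes m :: nat and S :: "nat \<Rightarrow> 'z" and H :: "('z \<Rightarrow> real) set"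
  assumes nonempty: "H \<noteq> {}"
    and bounded: "\<And>h i. h \<in> H \<Longrightarrow> i < m \<Longrightarrow> \<bar>h (S i)\<bar> \<le> 1"
begin

definition sup_corr :: "(nat \<Rightarrow> real) \<Rightarrow> real" where
  "sup_corr g = (SUP h\<in>H. corr m S h g)"

lemma emp_gauss_eq_integral_sup_corr: "emp_gauss m S H = (\<integral>g. sup_corr g \<partial>gauss_m m)"
  by (simp add: emp_gauss_eq_integral_corr sup_corr_def)

lemma abs_corr_le: "h \<in> H \<Longrightarrow> \<bar>corr m S h g\<bar> \<le> mean_abs m g"
  using abs_corr_diff_le[of m h S g "\<lambda>_. 0"] bounded by (simp add: corr_def)

lemma corr_le_sup_corr: "h \<in> H \<Longrightarrow> corr m S h g \<le> sup_corr g"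
  unfolding sup_corr_def using abs_corr_le
  by (intro cSUP_upper bdd_aboveI[of _ "mean_abs m g"]) (auto simp: abs_le_iff)

lemma abs_sup_corr_le: "\<bar>sup_corr g\<bar> \<le> mean_abs m g"
proof -
  obtain h where h: "h \<in> H" using nonempty by auto
  have "sup_corr g \<le> mean_abs m g"
    unfolding sup_corr_def using nonempty abs_corr_le by (intro cSUP_least) (auto simp: abs_le_iff)
  moreover have "- mean_abs m g \<le> sup_corr g"
    using abs_corr_le[OF h, of g] corr_le_sup_corr[OF h, of g] by linarith
  ultimately show ?thesis by linarith
qed

lemma sup_corr_le_shift: "sup_corr g \<le> sup_corr g' + mean_abs m (\<lambda>i. g i - g' i)"
  unfolding sup_corr_def[of g]
proof (rule cSUP_least[OF nonempty])
  fix h assume h: "h \<in> H"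
  then have "corr m S h g \<le> corr m S h g' + mean_abs m (\<lambda>i. g i - g' i)"
    using abs_corr_diff_le[of m h S g g'] bounded by auto
  then show "corr m S h g \<le> sup_corr g' + mean_abs m (\<lambda>i. g i - g' i)"
    using corr_le_sup_corr[OF h, of g'] by linarith
qed

text \<open>Being Lipschitz, sup_corr is determined by its values at the countably many rational
  vectors; this makes it measurable although H may be uncountable.\<close>
lemma sup_corr_eq_INF_rat:
  "sup_corr g = (INF qs :: rat list. sup_corr (\<lambda>i. of_rat (qs ! i)) + mean_abs m (\<lambda>i. g i - of_rat (qs ! i)))"
  (is "_ = (INF qs. ?t qs)")
proof (rule antisym)
  show "sup_corr g \<le> (INF qs. ?t qs)"
    by (intro cINF_greatest sup_corr_le_shift) auto
  show "(INF qs. ?t qs) \<le> sup_corr g"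
  proof (rule field_le_epsilon)
    fix e :: real assume "0 < e"
    then obtain qs where qs: "mean_abs m (\<lambda>i. g i - of_rat (qs ! i)) \<le> e / 2"
      using mean_abs_rat_approx[of "e / 2"] by auto
    have "(INF qs. ?t qs) \<le> ?t qs"
      using sup_corr_le_shift by (intro cINF_lower bdd_belowI[of _ "sup_corr g"]) auto
    also have "\<dots> \<le> sup_corr g + mean_abs m (\<lambda>i. of_rat (qs ! i) - g i) + e / 2"
      using sup_corr_le_shift[of "\<lambda>i. of_rat (qs ! i)" g] qs by linarith
    also have "mean_abs m (\<lambda>i. of_rat (qs ! i) - g i) = mean_abs m (\<lambda>i. g i - of_rat (qs ! i))"
      unfolding mean_abs_def by (simp add: abs_minus_commute)
    finally show "(INF qs. ?t qs) \<le> sup_corr g + e" using qs by linarith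
  qed
qed

lemma borel_measurable_sup_corr: "sup_corr \<in> borel_measurable (gauss_m m)"
  by (subst sup_corr_eq_INF_rat[abs_def])
    (intro borel_measurable_cINF_real borel_measurable_add borel_measurable_const
      borel_measurable_mean_abs_diff; simp)

lemma integrable_sup_corr: "integrable (gauss_m m) sup_corr"
  by (rule Bochner_Integration.integrable_bound[OF integrable_mean_abs borel_measurable_sup_corr])
    (simp add: abs_sup_corr_le abs_of_nonneg[OF mean_abs_nonneg])

lemma integrable_sup_corr_neg_on: "integrable (gauss_m m) (\<lambda>g. sup_corr (neg_on m g))"
  using integrable_distr_eq[OF measurable_neg_on borel_measurable_sup_corr] integrable_sup_corr
  by (simp add: distr_gauss_m_neg_on)

lemma integral_sup_corr_neg_on: "(\<integral>g. sup_corr (neg_on m g) \<partial>gauss_m m) = (\<integral>g. sup_corr g \<partial>gauss_m m)"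
  using integral_distr[OF measurable_neg_on borel_measurable_sup_corr] by (simp add: distr_gauss_m_neg_on)

lemma sup_corr_add_neg_on_nonneg: "0 \<le> sup_corr g + sup_corr (neg_on m g)"
proof -
  obtain h where h: "h \<in> H" using nonempty by auto
  show ?thesis
    using corr_le_sup_corr[OF h, of g] corr_le_sup_corr[OF h, of "neg_on m g"] corr_neg_on[of m S h g]
    by linarith
qed

lemma emp_gauss_nonneg: "0 \<le> emp_gauss m S H"
proof -
  have "0 \<le> (\<integral>g. sup_corr g + sup_corr (neg_on m g) \<partial>gauss_m m)"
    by (intro integral_nonneg_AE AE_I2 sup_corr_add_neg_on_nonneg)
  also have "\<dots> = 2 * emp_gauss m S H"
    using integrable_sup_corr integrable_sup_corr_neg_on integral_sup_corr_neg_on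
    by (simp add: emp_gauss_eq_integral_sup_corr)
  finally show ?thesis by simp
qed

lemma corr_le_of_affine_combination:
  fixes r :: nat and c :: "nat \<Rightarrow> real"
  assumes hs: "\<forall>j<r. hs j \<in> H" and c: "(\<Sum>j<r. c j) = 1" "(\<Sum>j<r. \<bar>c j\<bar>) \<le> W"
    and f: "\<forall>i<m. f (S i) = (\<Sum>j<r. c j * hs j (S i))"
  shows "corr m S f g \<le> sup_corr g + (W - 1) / 2 * (sup_corr g + sup_corr (neg_on m g))"
proof -
  have "corr m S f g = (\<Sum>j<r. c j * corr m S (hs j) g)"
    using f by (simp add: corr_def sum_distrib_left sum.swap[of _ "{..<m}"] ac_simps)
  also have "\<dots> \<le> sup_corr g + (W - 1) / 2 * (sup_corr g + sup_corr (neg_on m g))"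
  proof (rule affine_combination_le[OF c _ _ sup_corr_add_neg_on_nonneg])
    fix j assume "j < r"
    then have "hs j \<in> H" using hs by auto
    then show "corr m S (hs j) g \<le> sup_corr g" "- corr m S (hs j) g \<le> sup_corr (neg_on m g)"
      using corr_le_sup_corr corr_neg_on by metis+
  qed
  finally show ?thesis .
qed

text \<open>The two suprema in the bound above have the same expectation because the Gaussian
  measure is symmetric.\<close>
lemma emp_gauss_le_of_affine_combinations:
  assumes "H' \<noteq> {}"
    and comb: "\<And>f. f \<in> H' \<Longrightarrow> \<exists>(r::nat) (c::nat \<Rightarrow> real) hs. (\<forall>j<r. hs j \<in> H) \<and>
        (\<Sum>j<r. c j) = 1 \<and> (\<Sum>j<r. \<bar>c j\<bar>) \<le> W \<and> (\<forall>i<m. f (S i) = (\<Sum>j<r. c j * hs j (S i)))"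
  shows "emp_gauss m S H' \<le> W * emp_gauss m S H"
proof -
  define bound where "bound g = sup_corr g + (W - 1) / 2 * (sup_corr g + sup_corr (neg_on m g))" for g
  have corr_le_bound: "corr m S f g \<le> bound g" if "f \<in> H'" for f g
    using comb[OF that] corr_le_of_affine_combination unfolding bound_def by blast
  have "1 \<le> W"
  proof -
    obtain f where "f \<in> H'" using assms(1) by auto
    then obtain r :: nat and c :: "nat \<Rightarrow> real" where "(\<Sum>j<r. c j) = 1" "(\<Sum>j<r. \<bar>c j\<bar>) \<le> W"
      using comb by blast
    then show ?thesis using sum_abs[of c "{..<r}"] by linarith
  qed
  have integral_bound: "(\<integral>g. bound g \<partial>gauss_m m) = W * emp_gauss m S H"
    using integrable_sup_corr integrable_sup_corr_neg_on integral_sup_corr_neg_on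
    by (simp add: bound_def emp_gauss_eq_integral_sup_corr algebra_simps)
  have "emp_gauss m S H' \<le> (\<integral>g. bound g \<partial>gauss_m m)"
  proof (cases "integrable (gauss_m m) (\<lambda>g. SUP f\<in>H'. corr m S f g)")
    case True
    show ?thesis unfolding emp_gauss_eq_integral_corr
      using True integrable_sup_corr integrable_sup_corr_neg_on corr_le_bound assms(1)
      by (intro integral_mono) (auto simp: bound_def intro: cSUP_least)
  next
    case False
    then show ?thesis
      using integral_bound \<open>1 \<le> W\<close> emp_gauss_nonneg
      by (simp add: emp_gauss_eq_integral_corr not_integrable_integral_eq)
  qed
  then show ?thesis using integral_bound by simp
qed

end

section \<open>Channels\<close>

lemma sum_lessThan_add: "(\<Sum>t<a + b. f t) = (\<Sum>t<a. f t) + (\<Sum>t<b. f (a + t))" for a b :: nat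
  by (induction b) (auto simp: add.assoc)

lemma sum_lessThan_mult: "(\<Sum>t<r * R. f t) = (\<Sum>j<r. \<Sum>i<R. f (j * R + i))" for r R :: nat
proof (induction r)
  case (Suc r)
  have "(\<Sum>t<Suc r * R. f t) = (\<Sum>t<r * R + R. f t)" by (simp add: add.commute)
  then show ?case using Suc by (simp add: sum_lessThan_add)
qed simp

lemma mult_add_less_mult:
  fixes i k a N :: nat
  assumes "i < k" "a < N"
  shows "i * N + a < k * N"
proof -
  have "i * N + a < Suc i * N" using assms(2) by simp
  also have "\<dots> \<le> k * N" using assms(1) mult_le_mono1[of "Suc i" k N] by simp
  finally show ?thesis .
qed

type_synonym cmap = "complex mat \<Rightarrow> complex mat"

lemma is_channel_carrier: "is_channel N \<Phi> \<Longrightarrow> A \<in> carrier_mat N N \<Longrightarrow> \<Phi> A \<in> carrier_mat N N"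
  unfolding is_channel_def by blast

lemma is_channel_add:
  "is_channel N \<Phi> \<Longrightarrow> A \<in> carrier_mat N N \<Longrightarrow> B \<in> carrier_mat N N \<Longrightarrow> \<Phi> (A + B) = \<Phi> A + \<Phi> B"
  unfolding is_channel_def by blast

lemma is_channel_smult: "is_channel N \<Phi> \<Longrightarrow> A \<in> carrier_mat N N \<Longrightarrow> \<Phi> (c \<cdot>\<^sub>m A) = c \<cdot>\<^sub>m \<Phi> A"
  unfolding is_channel_def by blast

lemma is_channel_outside: "is_channel N \<Phi> \<Longrightarrow> A \<notin> carrier_mat N N \<Longrightarrow> \<Phi> A = 0\<^sub>m N N"
  unfolding is_channel_def by blast

lemma is_channel_trace: "is_channel N \<Phi> \<Longrightarrow> A \<in> carrier_mat N N \<Longrightarrow> mtrace (\<Phi> A) = mtrace A"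
  unfolding is_channel_def by blast

lemma is_channel_psd: "is_channel N \<Phi> \<Longrightarrow> psd (k * N) X \<Longrightarrow> psd (k * N) (ampl N k \<Phi> X)"
  unfolding is_channel_def by blast

lemma is_channel_zero:
  assumes "is_channel N \<Phi>"
  shows "\<Phi> (0\<^sub>m N N) = 0\<^sub>m N N"
proof -
  have "\<Phi> (0\<^sub>m N N) = 0 \<cdot>\<^sub>m \<Phi> (0\<^sub>m N N)"
    using is_channel_smult[OF assms, of "0\<^sub>m N N" 0] by simp
  also have "\<dots> = 0\<^sub>m N N"
    using is_channel_carrier[OF assms, of "0\<^sub>m N N"] by (intro eq_matI) auto
  finally show ?thesis .
qed

lemma is_channel_mat_sum:
  fixes r :: nat
  assumes ch: "is_channel N U" and B: "\<forall>j<r. B j \<in> carrier_mat N N"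
  shows "U (mat N N (\<lambda>ab. \<Sum>j<r. d j * B j $$ ab)) = mat N N (\<lambda>ab. \<Sum>j<r. d j * U (B j) $$ ab)"
  using B
proof (induction r)
  case 0
  then show ?case using is_channel_zero[OF ch] by (simp add: zero_mat_def)
next
  case (Suc r)
  have Br: "B r \<in> carrier_mat N N" using Suc.prems by auto
  have UBr: "U (B r) \<in> carrier_mat N N" using is_channel_carrier[OF ch Br] .
  have "mat N N (\<lambda>ab. \<Sum>j<Suc r. d j * B j $$ ab) = mat N N (\<lambda>ab. \<Sum>j<r. d j * B j $$ ab) + d r \<cdot>\<^sub>m B r"
    using Br by (intro eq_matI) auto
  then have "U (mat N N (\<lambda>ab. \<Sum>j<Suc r. d j * B j $$ ab))
      = mat N N (\<lambda>ab. \<Sum>j<r. d j * U (B j) $$ ab) + d r \<cdot>\<^sub>m U (B r)"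
    using Suc Br is_channel_add[OF ch] is_channel_smult[OF ch] by simp
  also have "\<dots> = mat N N (\<lambda>ab. \<Sum>j<Suc r. d j * U (B j) $$ ab)"
    using UBr by (intro eq_matI) auto
  finally show ?case .
qed

lemma blk_carrier [simp]: "blk N X i j \<in> carrier_mat N N"
  unfolding blk_def by simp

lemma blk_ampl:
  assumes ch: "is_channel N \<Psi>" and "i < k" "j < k"
  shows "blk N (ampl N k \<Psi> X) i j = \<Psi> (blk N X i j)"
proof (rule eq_matI)
  have C: "\<Psi> (blk N X i j) \<in> carrier_mat N N" by (rule is_channel_carrier[OF ch blk_carrier])
  then show "dim_row (blk N (ampl N k \<Psi> X) i j) = dim_row (\<Psi> (blk N X i j))"
    and "dim_col (blk N (ampl N k \<Psi> X) i j) = dim_col (\<Psi> (blk N X i j))"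
    by (auto simp: blk_def)
  fix a b assume "a < dim_row (\<Psi> (blk N X i j))" "b < dim_col (\<Psi> (blk N X i j))"
  then have a: "a < N" and b: "b < N" using C by auto
  have "i * N + a < k * N" "j * N + b < k * N"
    using a b \<open>i < k\<close> \<open>j < k\<close> by (auto intro: mult_add_less_mult)
  then show "blk N (ampl N k \<Psi> X) i j $$ (a, b) = \<Psi> (blk N X i j) $$ (a, b)"
    using a b by (simp add: blk_def ampl_def)
qed

lemma ampl_comp:
  assumes "is_channel N \<Psi>"
  shows "ampl N k (\<Phi> \<circ> \<Psi>) X = ampl N k \<Phi> (ampl N k \<Psi> X)"
proof (rule eq_matI)
  fix p q assume "p < dim_row (ampl N k \<Phi> (ampl N k \<Psi> X))" "q < dim_col (ampl N k \<Phi> (ampl N k \<Psi> X))"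
  then have "p < k * N" "q < k * N" by (auto simp: ampl_def)
  moreover have "p div N < k" "q div N < k"
    using calculation by (auto simp: less_mult_imp_div_less)
  ultimately show "ampl N k (\<Phi> \<circ> \<Psi>) X $$ (p, q) = ampl N k \<Phi> (ampl N k \<Psi> X) $$ (p, q)"
    using blk_ampl[OF assms, of "p div N" k "q div N" X] by (simp add: ampl_def)
qed (auto simp: ampl_def)

lemma is_channel_comp:
  assumes ch1: "is_channel N \<Phi>" and ch2: "is_channel N \<Psi>"
  shows "is_channel N (\<Phi> \<circ> \<Psi>)"
  unfolding is_channel_def
proof (intro conjI allI ballI impI)
  fix A :: "complex mat" assume "A \<notin> carrier_mat N N"
  then show "(\<Phi> \<circ> \<Psi>) A = 0\<^sub>m N N" using is_channel_outside[OF ch2] is_channel_zero[OF ch1] by simp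
next
  fix A :: "complex mat" and c assume A: "A \<in> carrier_mat N N"
  then have \<Psi>A: "\<Psi> A \<in> carrier_mat N N" by (rule is_channel_carrier[OF ch2])
  show "(\<Phi> \<circ> \<Psi>) A \<in> carrier_mat N N" using is_channel_carrier[OF ch1 \<Psi>A] by simp
  show "mtrace ((\<Phi> \<circ> \<Psi>) A) = mtrace A"
    using \<Psi>A A is_channel_trace[OF ch1] is_channel_trace[OF ch2] by simp
  show "(\<Phi> \<circ> \<Psi>) (c \<cdot>\<^sub>m A) = c \<cdot>\<^sub>m (\<Phi> \<circ> \<Psi>) A"
    using \<Psi>A A is_channel_smult[OF ch1] is_channel_smult[OF ch2] by simp
next
  fix A B :: "complex mat" assume "A \<in> carrier_mat N N" "B \<in> carrier_mat N N"
  then show "(\<Phi> \<circ> \<Psi>) (A + B) = (\<Phi> \<circ> \<Psi>) A + (\<Phi> \<circ> \<Psi>) B"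
    using is_channel_carrier[OF ch2] is_channel_add[OF ch1] is_channel_add[OF ch2] by simp
next
  fix k and X :: "complex mat" assume "psd (k * N) X"
  then show "psd (k * N) (ampl N k (\<Phi> \<circ> \<Psi>) X)"
    unfolding ampl_comp[OF ch2] by (intro is_channel_psd[OF ch1] is_channel_psd[OF ch2])
qed

section \<open>Affine decompositions of channels\<close>

definition chan_comb :: "nat \<Rightarrow> nat \<Rightarrow> (nat \<Rightarrow> real) \<Rightarrow> (nat \<Rightarrow> cmap) \<Rightarrow> cmap" where
  "chan_comb N r c Ps = (\<lambda>A. mat N N (\<lambda>ab. \<Sum>j<r. complex_of_real (c j) * Ps j A $$ ab))"

lemma conv_ch_eq:
  "conv_ch N Os = {chan_comb N r c Ps | r c Ps. (\<forall>j<r. 0 \<le> c j \<and> Ps j \<in> Os) \<and> (\<Sum>j<r. c j) = 1}"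
  unfolding conv_ch_def chan_comb_def by blast

definition affine_decomp :: "nat \<Rightarrow> cmap set \<Rightarrow> real \<Rightarrow> cmap \<Rightarrow> bool" where
  "affine_decomp N Os W T \<longleftrightarrow> (\<exists>r c Ps. (\<forall>j<r. Ps j \<in> Os) \<and> (\<Sum>j<r. c j) = 1 \<and>
     (\<Sum>j<r. \<bar>c j\<bar>) \<le> W \<and> (\<forall>A \<in> carrier_mat N N. T A = chan_comb N r c Ps A))"

lemma affine_decomp_mono: "affine_decomp N Os W T \<Longrightarrow> W \<le> W' \<Longrightarrow> affine_decomp N Os W' T"
  unfolding affine_decomp_def by (meson order_trans)

lemma affine_decomp_self:
  assumes "\<Phi> \<in> Os" "is_channel N \<Phi>"
  shows "affine_decomp N Os 1 \<Phi>"
proof -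
  have "\<Phi> A = chan_comb N 1 (\<lambda>_. 1) (\<lambda>_. \<Phi>) A" if "A \<in> carrier_mat N N" for A
    using is_channel_carrier[OF assms(2) that] by (intro eq_matI) (auto simp: chan_comb_def)
  then show ?thesis unfolding affine_decomp_def using assms(1)
    by (intro exI[of _ 1] exI[of _ "\<lambda>_. 1"] exI[of _ "\<lambda>_. \<Phi>"]) auto
qed

text \<open>The definition of mix_ch gives T = (1 + l) mix_ch N l T \<Phi>' - l \<Phi>', an affine combination of
  two convex combinations of free channels of total weight 1 + 2 l.\<close>
lemma affine_decomp_mix_ch:
  assumes ch: "is_channel N T" and l: "0 \<le> l"
    and \<Phi>': "\<Phi>' \<in> conv_ch N Os" and mix: "mix_ch N l T \<Phi>' \<in> conv_ch N Os"
  shows "affine_decomp N Os (1 + 2 * l) T"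
proof -
  obtain r1 c1 P1 where P1: "\<forall>j<r1. 0 \<le> c1 j \<and> P1 j \<in> Os" "(\<Sum>j<r1. c1 j) = 1"
    and \<Phi>'_eq: "\<Phi>' = chan_comb N r1 c1 P1"
    using \<Phi>' unfolding conv_ch_eq by blast
  obtain r2 c2 P2 where P2: "\<forall>j<r2. 0 \<le> c2 j \<and> P2 j \<in> Os" "(\<Sum>j<r2. c2 j) = 1"
    and mix_eq: "mix_ch N l T \<Phi>' = chan_comb N r2 c2 P2"
    using mix unfolding conv_ch_eq by blast
  define c where "c t = (if t < r2 then (1 + l) * c2 t else - l * c1 (t - r2))" for t
  define Ps where "Ps t = (if t < r2 then P2 t else P1 (t - r2))" for t
  have "\<forall>j<r2 + r1. Ps j \<in> Os" unfolding Ps_def using P1 P2 by auto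
  moreover have "(\<Sum>t<r2 + r1. c t) = 1"
    unfolding sum_lessThan_add c_def using P1(2) P2(2) by (simp add: sum_distrib_left[symmetric] sum_negf)
  moreover have "(\<Sum>t<r2 + r1. \<bar>c t\<bar>) \<le> 1 + 2 * l"
  proof -
    have "(\<Sum>t<r2. \<bar>c t\<bar>) = (1 + l) * (\<Sum>t<r2. c2 t)" "(\<Sum>t<r1. \<bar>c (r2 + t)\<bar>) = l * (\<Sum>t<r1. c1 t)"
      unfolding c_def sum_distrib_left using P1(1) P2(1) l by (auto intro!: sum.cong simp: abs_mult)
    then show ?thesis unfolding sum_lessThan_add using P1(2) P2(2) by simp
  qed
  moreover have "T A = chan_comb N (r2 + r1) c Ps A" if A: "A \<in> carrier_mat N N" for A
  proof (rule eq_matI)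
    fix a b assume "a < dim_row (chan_comb N (r2 + r1) c Ps A)" "b < dim_col (chan_comb N (r2 + r1) c Ps A)"
    then have ab: "a < N" "b < N" by (auto simp: chan_comb_def)
    have "(T A $$ (a, b) + complex_of_real l * \<Phi>' A $$ (a, b)) / complex_of_real (1 + l)
        = chan_comb N r2 c2 P2 A $$ (a, b)"
      using ab arg_cong[OF mix_eq, of "\<lambda>\<Phi>. \<Phi> A $$ (a, b)"] by (simp add: mix_ch_def)
    then have "T A $$ (a, b) = complex_of_real (1 + l) * chan_comb N r2 c2 P2 A $$ (a, b)
        - complex_of_real l * chan_comb N r1 c1 P1 A $$ (a, b)"
      using l unfolding \<Phi>'_eq by (simp add: field_simps del: of_real_add)
    also have "\<dots> = chan_comb N (r2 + r1) c Ps A $$ (a, b)"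
      using ab unfolding chan_comb_def sum_lessThan_add c_def Ps_def
      by (simp add: sum_distrib_left sum_negf algebra_simps)
    finally show "T A $$ (a, b) = chan_comb N (r2 + r1) c Ps A $$ (a, b)" .
  qed (use is_channel_carrier[OF ch A] in \<open>auto simp: chan_comb_def\<close>)
  ultimately show ?thesis unfolding affine_decomp_def by blast
qed

lemma affine_decomp_comp:
  assumes chU: "is_channel N U" and U: "affine_decomp N Os W1 U" and T: "affine_decomp N Os W2 T"
    and Os_ch: "\<forall>\<Phi>\<in>Os. is_channel N \<Phi>" and Os_comp: "\<forall>\<Phi>\<in>Os. \<forall>\<Phi>'\<in>Os. \<Phi> \<circ> \<Phi>' \<in> Os"
  shows "affine_decomp N Os (W1 * W2) (U \<circ> T)"
proof -
  obtain r c Ps where Ps: "\<forall>j<r. Ps j \<in> Os" and c: "(\<Sum>j<r. c j) = 1" "(\<Sum>j<r. \<bar>c j\<bar>) \<le> W2"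
    and T_eq: "\<forall>A \<in> carrier_mat N N. T A = chan_comb N r c Ps A"
    using T unfolding affine_decomp_def by blast
  obtain R d Qs where Qs: "\<forall>i<R. Qs i \<in> Os" and d: "(\<Sum>i<R. d i) = 1" "(\<Sum>i<R. \<bar>d i\<bar>) \<le> W1"
    and U_eq: "\<forall>A \<in> carrier_mat N N. U A = chan_comb N R d Qs A"
    using U unfolding affine_decomp_def by blast
  have "R > 0" using d(1) by (cases R) auto
  then have divmod: "(j * R + i) div R = j" "(j * R + i) mod R = i" if "i < R" for i j
    using that by auto
  define e where "e t = c (t div R) * d (t mod R)" for t
  define PQs where "PQs t = Qs (t mod R) \<circ> Ps (t div R)" for t
  have "\<forall>t<r * R. PQs t \<in> Os"
    unfolding PQs_def using Ps Qs Os_comp \<open>R > 0\<close> by (auto simp: less_mult_imp_div_less)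
  moreover have "(\<Sum>t<r * R. e t) = 1"
    unfolding sum_lessThan_mult e_def using c(1) d(1) divmod by (simp add: sum_distrib_left[symmetric])
  moreover have "(\<Sum>t<r * R. \<bar>e t\<bar>) \<le> W1 * W2"
  proof -
    have "(\<Sum>t<r * R. \<bar>e t\<bar>) = (\<Sum>j<r. \<bar>c j\<bar>) * (\<Sum>i<R. \<bar>d i\<bar>)"
      unfolding sum_lessThan_mult e_def sum_product using divmod by (simp add: abs_mult)
    also have "\<dots> \<le> W2 * W1"
      using c(2) d(2) by (intro mult_mono) (auto intro: sum_nonneg order_trans[OF _ c(2)])
    finally show ?thesis by (simp add: mult.commute)
  qed
  moreover have "(U \<circ> T) A = chan_comb N (r * R) e PQs A" if A: "A \<in> carrier_mat N N" for A
  proof -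
    have PsA: "\<forall>j<r. Ps j A \<in> carrier_mat N N" using Ps Os_ch A is_channel_carrier by blast
    have "(U \<circ> T) A = mat N N (\<lambda>ab. \<Sum>j<r. complex_of_real (c j) * U (Ps j A) $$ ab)"
      using T_eq A is_channel_mat_sum[OF chU PsA] by (simp add: chan_comb_def)
    also have "\<dots> = mat N N (\<lambda>ab. \<Sum>j<r. \<Sum>i<R. complex_of_real (e (j * R + i)) * PQs (j * R + i) A $$ ab)"
      using U_eq PsA divmod
      by (intro cong_mat refl sum.cong) (auto simp: chan_comb_def e_def PQs_def sum_distrib_left ac_simps)
    also have "\<dots> = chan_comb N (r * R) e PQs A"
      unfolding chan_comb_def sum_lessThan_mult ..
    finally show ?thesis .
  qed
  ultimately show ?thesis unfolding affine_decomp_def by blast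
qed

definition slot :: "cmap \<Rightarrow> cmap option \<Rightarrow> cmap" where
  "slot \<Psi> s = (case s of None \<Rightarrow> \<Psi> | Some \<Phi> \<Rightarrow> \<Phi>)"

lemma comp_slots_Cons: "comp_slots \<Psi> (s # L) = slot \<Psi> s \<circ> comp_slots \<Psi> L"
  by (simp add: comp_slots_def slot_def)

lemma comp_slots_single: "comp_slots \<Psi> [s] = slot \<Psi> s"
  by (simp add: comp_slots_def slot_def)

lemma is_channel_comp_slots:
  assumes Os_ch: "\<forall>\<Phi>\<in>Os. is_channel N \<Phi>" and \<Psi>: "is_channel N \<Psi>"
  shows "L \<noteq> [] \<Longrightarrow> \<forall>s\<in>set L. s = None \<or> the s \<in> Os \<Longrightarrow> is_channel N (comp_slots \<Psi> L)"
proof (induction L)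
  case (Cons s L)
  have ch: "is_channel N (slot \<Psi> s)" using Cons.prems Os_ch \<Psi> by (cases s) (auto simp: slot_def)
  show ?case
  proof (cases "L = []")
    case False
    then show ?thesis
      unfolding comp_slots_Cons using Cons by (intro is_channel_comp[OF ch]) auto
  qed (use ch in \<open>simp add: comp_slots_single\<close>)
qed simp

lemma affine_decomp_comp_slots:
  assumes Os_ch: "\<forall>\<Phi>\<in>Os. is_channel N \<Phi>" and Os_comp: "\<forall>\<Phi>\<in>Os. \<forall>\<Phi>'\<in>Os. \<Phi> \<circ> \<Phi>' \<in> Os"
    and \<Psi>: "is_channel N \<Psi>" "affine_decomp N Os W \<Psi>"
  shows "L \<noteq> [] \<Longrightarrow> \<forall>s\<in>set L. s = None \<or> the s \<in> Os \<Longrightarrow>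
    affine_decomp N Os (W ^ length (filter (\<lambda>s. s = None) L)) (comp_slots \<Psi> L)"
proof (induction L)
  case (Cons s L)
  have ch: "is_channel N (slot \<Psi> s)" using Cons.prems Os_ch \<Psi> by (cases s) (auto simp: slot_def)
  have dec: "affine_decomp N Os (W ^ length (filter (\<lambda>s. s = None) [s])) (slot \<Psi> s)"
    using Cons.prems Os_ch \<Psi>(2) by (cases s) (auto simp: slot_def intro: affine_decomp_self)
  show ?case
  proof (cases "L = []")
    case False
    then have "affine_decomp N Os (W ^ length (filter (\<lambda>s. s = None) [s]) * W ^ length (filter (\<lambda>s. s = None) L))
        (slot \<Psi> s \<circ> comp_slots \<Psi> L)"
      using Cons by (intro affine_decomp_comp[OF ch dec _ Os_ch Os_comp]) auto
    then show ?thesis unfolding comp_slots_Cons by (cases s) (simp_all del: o_apply)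
  qed (use dec in \<open>simp add: comp_slots_single\<close>)
qed simp

lemma subset_O_k: "\<O> \<subseteq> O_k \<O> \<Psi> k"
proof
  fix \<Phi> assume "\<Phi> \<in> \<O>"
  then show "\<Phi> \<in> O_k \<O> \<Psi> k"
    unfolding O_k_def by (intro CollectI exI[of _ "[Some \<Phi>]"]) (auto simp: comp_slots_single slot_def)
qed

lemma O_k_channels:
  assumes "\<forall>\<Phi>\<in>\<O>. is_channel N \<Phi>" "is_channel N \<Psi>"
  shows "\<forall>T\<in>O_k \<O> \<Psi> k. is_channel N T"
  unfolding O_k_def using is_channel_comp_slots[OF assms] by blast

lemma affine_decomp_O_k:
  assumes "\<forall>\<Phi>\<in>\<O>. is_channel N \<Phi>" "\<forall>\<Phi>\<in>\<O>. \<forall>\<Phi>'\<in>\<O>. \<Phi> \<circ> \<Phi>' \<in> \<O>"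
    and "is_channel N \<Psi>" "affine_decomp N \<O> W \<Psi>" "1 \<le> W"
    and "T \<in> O_k \<O> \<Psi> k"
  shows "affine_decomp N \<O> (W ^ k) T"
proof -
  obtain L where "T = comp_slots \<Psi> L" "L \<noteq> []" "\<forall>s\<in>set L. s = None \<or> the s \<in> \<O>"
    "length (filter (\<lambda>s. s = None) L) \<le> k"
    using assms(6) unfolding O_k_def by blast
  then show ?thesis
    using affine_decomp_comp_slots[OF assms(1-4)] power_increasing[OF _ assms(5)]
    by (blast intro: affine_decomp_mono)
qed

section \<open>Transition functions of channels\<close>

lemma ketbra_carrier [simp]: "ketbra N x \<in> carrier_mat N N"
  unfolding ketbra_def by simp

lemma ketbra_entry: "i < N \<Longrightarrow> j < N \<Longrightarrow> ketbra N x $$ (i, j) = (if i = x \<and> j = x then 1 else 0)"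
  unfolding ketbra_def by simp

lemma psd_ketbra:
  assumes x: "x < N"
  shows "psd N (ketbra N x)"
proof -
  have "(\<Sum>i<N. \<Sum>j<N. cnj (v i) * ketbra N x $$ (i, j) * v j) = cnj (v x) * v x" for v :: "nat \<Rightarrow> complex"
  proof -
    have "(\<Sum>j<N. cnj (v i) * ketbra N x $$ (i, j) * v j)
        = (\<Sum>j<N. if j = x then (if i = x then cnj (v x) * v x else 0) else 0)" if "i < N" for i
      using that x by (intro sum.cong) (auto simp: ketbra_entry)
    then show ?thesis using x by simp
  qed
  then show ?thesis unfolding psd_def Let_def by simp
qed

lemma psd_diag_nonneg:
  assumes "psd N A" and y: "y < N"
  shows "0 \<le> Re (A $$ (y, y))"
proof -
  define v :: "nat \<Rightarrow> complex" where "v i = (if i = y then 1 else 0)" for i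
  have "(\<Sum>j<N. cnj (v i) * A $$ (i, j) * v j) = (\<Sum>j<N. if j = y then (if i = y then A $$ (y, y) else 0) else 0)"
    for i by (intro sum.cong) (auto simp: v_def)
  then have "(\<Sum>i<N. \<Sum>j<N. cnj (v i) * A $$ (i, j) * v j) = A $$ (y, y)"
    using y by simp
  moreover have "0 \<le> Re (\<Sum>i<N. \<Sum>j<N. cnj (v i) * A $$ (i, j) * v j)"
    using assms(1) unfolding psd_def Let_def by blast
  ultimately show ?thesis by simp
qed

lemma ampl_one:
  assumes "is_channel N \<Phi>" "K \<in> carrier_mat N N"
  shows "ampl N 1 \<Phi> K = \<Phi> K"
proof -
  have "blk N K 0 0 = K" using assms(2) by (intro eq_matI) (auto simp: blk_def)
  then show ?thesis
    using is_channel_carrier[OF assms] by (intro eq_matI) (auto simp: ampl_def)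
qed

lemma mtrace_mult_ketbra:
  assumes "A \<in> carrier_mat N N" "y < N"
  shows "mtrace (A * ketbra N y) = A $$ (y, y)"
proof -
  have "(A * ketbra N y) $$ (i, i) = (if i = y then A $$ (y, y) else 0)" if "i < N" for i
    using assms that by (simp add: ketbra_def scalar_prod_def sum.delta' if_distrib[of "\<lambda>t. _ * t"] cong: if_cong)
  then show ?thesis
    using assms by (simp add: mtrace_def sum.delta')
qed

lemma f_ch_eq_diag:
  assumes "is_channel (2^n) \<Phi>" "y < 2^n"
  shows "f_ch n \<Phi> (x, y) = Re (\<Phi> (ketbra (2^n) x) $$ (y, y))"
  unfolding f_ch_def using mtrace_mult_ketbra[OF is_channel_carrier[OF assms(1) ketbra_carrier] assms(2)] by simp

lemma abs_f_ch_le_one: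
  assumes "qchannel n \<Phi>" "z \<in> dom_n n"
  shows "\<bar>f_ch n \<Phi> z\<bar> \<le> 1"
proof -
  define N :: nat where "N = 2^n"
  obtain x y where z: "z = (x, y)" and xy: "x < N" "y < N" using assms(2) by (auto simp: dom_n_def N_def)
  define K where "K = ketbra N x"
  have ch: "is_channel N \<Phi>" using assms(1) by (simp add: qchannel_def N_def)
  have \<Phi>K: "\<Phi> K \<in> carrier_mat N N" unfolding K_def by (rule is_channel_carrier[OF ch ketbra_carrier])
  have "psd (1 * N) (ampl N 1 \<Phi> K)" using psd_ketbra[OF xy(1)] by (intro is_channel_psd[OF ch]) (simp add: K_def)
  then have psd: "psd N (\<Phi> K)" using ampl_one[OF ch] by (simp add: K_def)
  have "mtrace (\<Phi> K) = 1"
    using is_channel_trace[OF ch, of K] xy(1) by (simp add: K_def mtrace_def ketbra_def)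
  then have "(\<Sum>i<N. Re (\<Phi> K $$ (i, i))) = 1"
    using \<Phi>K by (simp add: mtrace_def flip: Re_sum)
  moreover have "Re (\<Phi> K $$ (y, y)) \<le> (\<Sum>i<N. Re (\<Phi> K $$ (i, i)))"
    using xy psd_diag_nonneg[OF psd] by (intro member_le_sum) auto
  moreover have "0 \<le> Re (\<Phi> K $$ (y, y))" using psd_diag_nonneg[OF psd xy(2)] .
  ultimately show ?thesis
    using f_ch_eq_diag[of n \<Phi> y x] ch xy(2) by (simp add: z K_def N_def)
qed

lemma f_ch_affine_decomp:
  assumes "affine_decomp (2^n) Os W T" "\<forall>\<Phi>\<in>Os. qchannel n \<Phi>"
  shows "\<exists>(r::nat) (c::nat \<Rightarrow> real) hs. (\<forall>j<r. hs j \<in> F_cls n Os) \<and> (\<Sum>j<r. c j) = 1 \<and>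
    (\<Sum>j<r. \<bar>c j\<bar>) \<le> W \<and> (\<forall>z \<in> dom_n n. f_ch n T z = (\<Sum>j<r. c j * hs j z))"
proof -
  obtain r c Ps where Ps: "\<forall>j<r. Ps j \<in> Os" and c: "(\<Sum>j<r. c j) = 1" "(\<Sum>j<r. \<bar>c j\<bar>) \<le> W"
    and T: "\<forall>A \<in> carrier_mat (2^n) (2^n). T A = chan_comb (2^n) r c Ps A"
    using assms(1) unfolding affine_decomp_def by blast
  have "f_ch n T z = (\<Sum>j<r. c j * f_ch n (Ps j) z)" if z: "z \<in> dom_n n" for z
  proof -
    obtain x y where z: "z = (x, y)" and y: "y < 2^n" using z by (auto simp: dom_n_def)
    define K where "K = ketbra (2^n) x"
    have "f_ch n T z = Re (chan_comb (2^n) r c Ps K $$ (y, y))"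
      using T mtrace_mult_ketbra[of "chan_comb (2^n) r c Ps K" "2^n" y] y
      by (simp add: z f_ch_def K_def chan_comb_def)
    also have "\<dots> = (\<Sum>j<r. c j * Re (Ps j K $$ (y, y)))"
      using y by (simp add: chan_comb_def Re_sum)
    also have "\<dots> = (\<Sum>j<r. c j * f_ch n (Ps j) z)"
      using Ps assms(2) y by (intro sum.cong) (auto simp: z K_def qchannel_def f_ch_eq_diag)
    finally show ?thesis .
  qed
  then show ?thesis using Ps c
    by (intro exI[of _ r] exI[of _ c] exI[of _ "\<lambda>j. f_ch n (Ps j)"]) (auto simp: F_cls_def)
qed

lemma bounded_sample_F_cls:
  assumes "\<forall>\<Phi>\<in>Os. qchannel n \<Phi>" "Os \<noteq> {}" "\<forall>i<m. S i \<in> dom_n n"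
  shows "bounded_sample m S (F_cls n Os)"
proof
  show "F_cls n Os \<noteq> {}" using assms(2) by (simp add: F_cls_def)
  fix h i assume "h \<in> F_cls n Os" "i < m"
  then obtain \<Phi> where "\<Phi> \<in> Os" "h = f_ch n \<Phi>" "S i \<in> dom_n n" using assms(3) by (auto simp: F_cls_def)
  then show "\<bar>h (S i)\<bar> \<le> 1" using assms(1) abs_f_ch_le_one[of n \<Phi> "S i"] by simp
qed

lemma emp_gauss_F_cls_nonneg:
  assumes "\<forall>\<Phi>\<in>Os. qchannel n \<Phi>" "Os \<noteq> {}" "\<forall>i<m. S i \<in> dom_n n"
  shows "0 \<le> emp_gauss m S (F_cls n Os)"
  using bounded_sample.emp_gauss_nonneg[OF bounded_sample_F_cls[OF assms]] .

lemma emp_gauss_F_cls_le: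
  assumes "\<forall>\<Phi>\<in>Os. qchannel n \<Phi>" "Os \<noteq> {}" "\<forall>i<m. S i \<in> dom_n n"
    and "Q \<noteq> {}" "\<forall>T\<in>Q. affine_decomp (2^n) Os W T"
  shows "emp_gauss m S (F_cls n Q) \<le> W * emp_gauss m S (F_cls n Os)"
proof (rule bounded_sample.emp_gauss_le_of_affine_combinations[OF bounded_sample_F_cls[OF assms(1-3)]])
  show "F_cls n Q \<noteq> {}" using assms(4) by (simp add: F_cls_def)
  fix f assume "f \<in> F_cls n Q"
  then obtain T where T: "T \<in> Q" and f: "f = f_ch n T" by (auto simp: F_cls_def)
  obtain r :: nat and c :: "nat \<Rightarrow> real" and hs where hs: "\<forall>j<r. hs j \<in> F_cls n Os"
    and c: "(\<Sum>j<r. c j) = 1" "(\<Sum>j<r. \<bar>c j\<bar>) \<le> W"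
    and eq: "\<forall>z \<in> dom_n n. f_ch n T z = (\<Sum>j<r. c j * hs j z)"
    using f_ch_affine_decomp[OF bspec[OF assms(5) T] assms(1)] by blast
  show "\<exists>(r::nat) (c::nat \<Rightarrow> real) hs. (\<forall>j<r. hs j \<in> F_cls n Os) \<and> (\<Sum>j<r. c j) = 1 \<and>
      (\<Sum>j<r. \<bar>c j\<bar>) \<le> W \<and> (\<forall>i<m. f (S i) = (\<Sum>j<r. c j * hs j (S i)))"
    using hs c eq assms(3) unfolding f by blast
qed

section \<open>Robustness and Gaussian complexity\<close>

lemma le_of_le_power_plus:
  fixes a E G :: real
  assumes "\<And>e. 0 < e \<Longrightarrow> E \<le> (a + e) ^ k * G"
  shows "E \<le> a ^ k * G"
proof -
  have "((\<lambda>e. (a + e) ^ k * G) \<longlongrightarrow> (a + 0) ^ k * G) (at_right 0)"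
    by (intro tendsto_intros)
  moreover have "eventually (\<lambda>e. E \<le> (a + e) ^ k * G) (at_right 0)"
    using assms eventually_at_right_less[of 0] by (auto elim: eventually_mono)
  ultimately show ?thesis
    using tendsto_lowerbound[of _ _ "at_right (0::real)"] by (simp add: trivial_limit_at_right_real)
qed

lemma robustness_nonneg: "0 \<le> robustness n Os T"
  unfolding robustness_def by (rule Inf_greatest) auto

lemma affine_decomp_of_robustness_less:
  assumes "is_channel (2^n) T" "robustness n Os T < ereal r"
  shows "affine_decomp (2^n) Os (1 + 2 * r) T"
proof -
  obtain l \<Phi>' where "0 \<le> l" "l < r" "\<Phi>' \<in> conv_ch (2^n) Os" "mix_ch (2^n) l T \<Phi>' \<in> conv_ch (2^n) Os"
    using assms(2) unfolding robustness_def Inf_less_iff by auto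
  then show ?thesis
    by (intro affine_decomp_mono[OF affine_decomp_mix_ch[OF assms(1)]]) auto
qed

lemma emp_gauss_O_k_le_robustness:
  assumes O_ch: "\<forall>\<Phi>\<in>\<O>. qchannel n \<Phi>" and O_ne: "\<O> \<noteq> {}"
    and O_comp: "\<forall>\<Phi>\<in>\<O>. \<forall>\<Phi>'\<in>\<O>. \<Phi> \<circ> \<Phi>' \<in> \<O>"
    and \<Psi>: "qchannel n \<Psi>" "robustness n \<O> \<Psi> = ereal \<rho>" and S: "\<forall>i<m. S i \<in> dom_n n"
  shows "emp_gauss m S (F_cls n (O_k \<O> \<Psi> k)) \<le> (1 + 2 * \<rho>) ^ k * emp_gauss m S (F_cls n \<O>)"
proof (rule le_of_le_power_plus)
  fix e :: real assume "0 < e"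
  have O_ch': "\<forall>\<Phi>\<in>\<O>. is_channel (2^n) \<Phi>" and \<Psi>_ch: "is_channel (2^n) \<Psi>"
    using O_ch \<Psi>(1) by (auto simp: qchannel_def)
  have "affine_decomp (2^n) \<O> (1 + 2 * (\<rho> + e / 2)) \<Psi>"
    using \<Psi>(2) \<open>0 < e\<close> by (intro affine_decomp_of_robustness_less[OF \<Psi>_ch]) simp
  moreover have "1 \<le> 1 + 2 * (\<rho> + e / 2)"
    using robustness_nonneg[of n \<O> \<Psi>] \<Psi>(2) \<open>0 < e\<close> by simp
  ultimately have "\<forall>T\<in>O_k \<O> \<Psi> k. affine_decomp (2^n) \<O> ((1 + 2 * \<rho> + e) ^ k) T"
    using affine_decomp_O_k[OF O_ch' O_comp \<Psi>_ch] by (simp add: algebra_simps)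
  then show "emp_gauss m S (F_cls n (O_k \<O> \<Psi> k)) \<le> (1 + 2 * \<rho> + e) ^ k * emp_gauss m S (F_cls n \<O>)"
    using subset_O_k[of \<O> \<Psi> k] O_ne by (intro emp_gauss_F_cls_le[OF O_ch O_ne S]) auto
qed

lemma emp_gauss_le_gamma_max:
  assumes O_ch: "\<forall>\<Phi>\<in>\<O>. qchannel n \<Phi>" and O_ne: "\<O> \<noteq> {}"
    and Q: "\<O> \<subseteq> Q" "\<forall>T\<in>Q. qchannel n T"
    and W: "1 + 2 * gamma_max n \<O> = ereal W" and S: "\<forall>i<m. S i \<in> dom_n n"
  shows "emp_gauss m S (F_cls n Q) \<le> W * emp_gauss m S (F_cls n \<O>)"
proof -
  have "emp_gauss m S (F_cls n Q) \<le> W ^ 1 * emp_gauss m S (F_cls n \<O>)"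
  proof (rule le_of_le_power_plus)
    fix e :: real assume "0 < e"
    have "affine_decomp (2^n) \<O> (W + e) T" if "T \<in> Q" for T
    proof -
      have "robustness n \<O> T \<le> gamma_max n \<O>"
        unfolding gamma_max_def using Q(2) that by (intro SUP_upper) auto
      also have "\<dots> < ereal ((W - 1) / 2 + e / 2)" using W \<open>0 < e\<close> by (cases "gamma_max n \<O>") auto
      finally have "affine_decomp (2^n) \<O> (1 + 2 * ((W - 1) / 2 + e / 2)) T"
        using Q(2) that by (intro affine_decomp_of_robustness_less) (auto simp: qchannel_def)
      moreover have "1 + 2 * ((W - 1) / 2 + e / 2) = W + e" by (simp add: field_simps)
      ultimately show ?thesis by (simp only:)
    qed
    then show "emp_gauss m S (F_cls n Q) \<le> (W + e) ^ 1 * emp_gauss m S (F_cls n \<O>)"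
      using Q(1) O_ne by (intro emp_gauss_F_cls_le[OF O_ch O_ne S]) auto
  qed
  then show ?thesis by simp
qed

lemma expectation_Pi_pmf_mono:
  fixes f g :: "(nat \<Rightarrow> 'a) \<Rightarrow> real"
  assumes "finite A" "set_pmf D \<subseteq> A" "\<And>S. \<forall>i<m. S i \<in> A \<Longrightarrow> f S \<le> g S"
  shows "measure_pmf.expectation (Pi_pmf {..<m} z (\<lambda>_. D)) f
    \<le> measure_pmf.expectation (Pi_pmf {..<m} z (\<lambda>_. D)) g"
proof -
  have support: "set_pmf (Pi_pmf {..<m} z (\<lambda>_. D)) = PiE_dflt {..<m} z (\<lambda>_. set_pmf D)"
    using set_Pi_pmf[of "{..<m}" z "\<lambda>_. D"] by (simp add: o_def)
  have "finite (set_pmf (Pi_pmf {..<m} z (\<lambda>_. D)))"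
    unfolding support using assms(1,2) by (intro finite_PiE_dflt) (auto intro: finite_subset)
  moreover have "\<forall>i<m. S i \<in> A" if "S \<in> set_pmf (Pi_pmf {..<m} z (\<lambda>_. D))" for S
    using that assms(2) unfolding support by (auto simp: PiE_dflt_def)
  ultimately show ?thesis
    using assms(3) by (intro integral_mono_AE integrable_measure_pmf_finite AE_pmfI) auto
qed

lemma gauss_cx_le:
  assumes "finite A" "set_pmf D \<subseteq> A" "\<And>S. \<forall>i<m. S i \<in> A \<Longrightarrow> emp_gauss m S H \<le> c * emp_gauss m S H'"
  shows "gauss_cx m D z H \<le> c * gauss_cx m D z H'"
  unfolding gauss_cx_def using expectation_Pi_pmf_mono[OF assms] by simp

lemma gauss_cx_nonneg:
  assumes "finite A" "set_pmf D \<subseteq> A" "\<And>S. \<forall>i<m. S i \<in> A \<Longrightarrow> 0 \<le> emp_gauss m S H"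
  shows "0 \<le> gauss_cx m D z H"
  unfolding gauss_cx_def using expectation_Pi_pmf_mono[OF assms(1,2), of m "\<lambda>_. 0"] assms(3) by simp

lemma ereal_le_min_mult:
  fixes x b g :: real and a :: ereal
  assumes "x \<le> b * g" "\<And>r. a = ereal r \<Longrightarrow> x \<le> r * g" "a \<noteq> -\<infinity>" "0 \<le> g"
  shows "ereal x \<le> min a (ereal b) * ereal g"
proof (cases a)
  case (real r)
  then show ?thesis using assms(1,2) by (cases "r \<le> b") (auto simp: min_def)
qed (use assms in auto)

theorem mainTheorem11:
  fixes n k :: nat
    and \<O> :: "(complex mat \<Rightarrow> complex mat) set"
    and \<Psi> :: "complex mat \<Rightarrow> complex mat"
  assumes O_ch: "\<forall>\<Phi> \<in> \<O>. qchannel n \<Phi>"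
    and O_ne: "\<O> \<noteq> {}"
    and O_comp: "\<forall>\<Phi> \<in> \<O>. \<forall>\<Phi>' \<in> \<O>. \<Phi> \<circ> \<Phi>' \<in> \<O>"
    and Psi_ch: "qchannel n \<Psi>"
    and Psi_fin: "robustness n \<O> \<Psi> < \<infinity>"
  shows "(\<forall>(m::nat) (S::nat \<Rightarrow> nat \<times> nat). (\<forall>i<m. S i \<in> dom_n n) \<longrightarrow>
            ereal (emp_gauss m S (F_cls n (O_k \<O> \<Psi> k)))
              \<le> min (1 + 2 * gamma_max n \<O>) ((1 + 2 * robustness n \<O> \<Psi>) ^ k)
                 * ereal (emp_gauss m S (F_cls n \<O>)))
       \<and> (\<forall>(m::nat) (D::(nat \<times> nat) pmf). set_pmf D \<subseteq> dom_n n \<longrightarrow>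
            ereal (gauss_cx m D (0,0) (F_cls n (O_k \<O> \<Psi> k)))
              \<le> min (1 + 2 * gamma_max n \<O>) ((1 + 2 * robustness n \<O> \<Psi>) ^ k)
                 * ereal (gauss_cx m D (0,0) (F_cls n \<O>)))"
proof -
  have O_k_ch: "\<forall>T\<in>O_k \<O> \<Psi> k. qchannel n T"
    using O_k_channels[of \<O> "2^n" \<Psi> k] O_ch Psi_ch unfolding qchannel_def by blast
  obtain \<rho> where \<rho>: "robustness n \<O> \<Psi> = ereal \<rho>"
    using Psi_fin robustness_nonneg[of n \<O> \<Psi>] by (cases "robustness n \<O> \<Psi>") auto
  have "robustness n \<O> \<Psi> \<le> gamma_max n \<O>"
    unfolding gamma_max_def using Psi_ch by (intro SUP_upper) auto
  then have gamma_max_ne: "1 + 2 * gamma_max n \<O> \<noteq> -\<infinity>"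
    using robustness_nonneg[of n \<O> \<Psi>] by (cases "gamma_max n \<O>") auto
  have power_eq: "(1 + 2 * robustness n \<O> \<Psi>) ^ k = ereal ((1 + 2 * \<rho>) ^ k)"
    by (simp add: \<rho> add.commute)
  note bounds = emp_gauss_O_k_le_robustness[OF O_ch O_ne O_comp Psi_ch \<rho>]
    emp_gauss_le_gamma_max[OF O_ch O_ne subset_O_k O_k_ch] emp_gauss_F_cls_nonneg[OF O_ch O_ne]
  have fin: "finite (dom_n n)" by (simp add: dom_n_def)
  show ?thesis
    unfolding power_eq
  proof (intro conjI allI impI)
    fix m :: nat and S :: "nat \<Rightarrow> nat \<times> nat" assume "\<forall>i<m. S i \<in> dom_n n"
    then show "ereal (emp_gauss m S (F_cls n (O_k \<O> \<Psi> k)))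
        \<le> min (1 + 2 * gamma_max n \<O>) (ereal ((1 + 2 * \<rho>) ^ k)) * ereal (emp_gauss m S (F_cls n \<O>))"
      using bounds by (intro ereal_le_min_mult[OF _ _ gamma_max_ne])
  next
    fix m :: nat and D :: "(nat \<times> nat) pmf" assume D: "set_pmf D \<subseteq> dom_n n"
    show "ereal (gauss_cx m D (0, 0) (F_cls n (O_k \<O> \<Psi> k)))
        \<le> min (1 + 2 * gamma_max n \<O>) (ereal ((1 + 2 * \<rho>) ^ k)) * ereal (gauss_cx m D (0, 0) (F_cls n \<O>))"
      using bounds(1) gauss_cx_le[OF fin D bounds(1)] gauss_cx_le[OF fin D bounds(2)]
        gauss_cx_nonneg[OF fin D bounds(3)]
      by (intro ereal_le_min_mult[OF _ _ gamma_max_ne])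
  qed
qed

end
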